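(* Let $F$ be a closed $\mathfrak{sl}_N$-foam and let $c,c'$ be two colorings of $F$ related by a Kempe move relative to the pigments $1$ and $2$. Then for every pigment $k\ge 3$, $$\theta^+_{1k}(F,c)+\theta^+_{2k}(F,c)\equiv\theta^+_{1k}(F,c')+\theta^+_{2k}(F,c')\pmod 2.$$
   Context: Fix $N\ge1$, pigments $\mathbb{P}=\{1,\dots,N\}$ with natural order. An $\mathfrak{sl}_N$-foam is obtained by gluing along their boundaries finitely many facets (compact connected oriented surfaces with boundary) labelled by $\{0,\dots,N\}$, locally modelled on: a disc in a facet; three facets labelled $a,b,a+b$ meeting along an oriented arc (a binding), whose orientation agrees with the boundary orientation of the facets labelled $a,b$ and disagrees with that of the facet labelled $a+b$, and which carries a cyclic ordering of its three facets; or a singular point (cone over the 1-skeleton of a tetrahedron) where six facets labelled $a,b,c,a+b,b+c,a+b+c$ meet along four bindings, with compatible cyclic orderings. Closed means compact without boundary. A coloring $c$ assigns to each facet $f$ a subset $c(f)\subseteq\mathbb{P}$ of cardinality the label of $f$, such that at each binding with facets labelled $a,b,a+b$ the colors of the first two have union equal to the color of the third. $F_i(c)$ is the closed surface formed by the facets whose color contains $i$; $F_{ij}(c)$ is the closed surface formed by facets whose color contains exactly one of $i,j$. For $i<j$, a binding with facets $f_1,f_2,f_3$ with $i\in c(f_1)$, $j\in c(f_2)$, $\{i,j\}\subseteq c(f_3)$ is positive w.r.t. $(i,j)$ if its cyclic order is $(f_1,f_2,f_3)$ and negative otherwise; $F_i(c)\cap F_j(c)\cap F_{ij}(c)$ is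 a disjoint union of circles each consisting entirely of positive or entirely of negative bindings; $\theta^+_{ij}(F,c)$ denotes the number of positive such circles. A Kempe move relative to $i$ and $j$ along $\Sigma$: given a coloring $c$ and a closed subsurface $\Sigma$ of $F_{ij}(c)$ (a union of connected components), the coloring $c'$ is obtained from $c$ by exchanging the pigments $i$ and $j$ in the colors of all facets contained in $\Sigma$ (and leaving all other facets unchanged). *)

theory Defs
  imports Main
begin

text \<open>Facets are identifiers of type 'f with labels; bindings (edges of the singular graph)
  are of type 'b; singular points of type 'v.
  For a binding b, the three facets glued along b are stored IN THEIR CYCLIC ORDER as
  (sm1 b, sm2 b, big b), where sm1 b, sm2 b are the facets labelled a, b and big b the
  facet labelled a+b.  circ b says that b is a closed circle without singular points;
  otherwise b is an oriented arc with a tail end (b,False) and a head end (b,True).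
  slot v i (i = 1..4) gives the four binding ends meeting at the singular point v, in the
  positions of the standard model: bindings (a,b,a+b), (a+b,c,a+b+c), (b,c,b+c),
  (a,b+c,a+b+c).\<close>

record ('f,'b,'v) foam =
  facets :: "'f set"
  lab :: "'f \<Rightarrow> nat"
  bindings :: "'b set"
  sm1 :: "'b \<Rightarrow> 'f"
  sm2 :: "'b \<Rightarrow> 'f"
  big :: "'b \<Rightarrow> 'f"
  circ :: "'b \<Rightarrow> bool"
  verts :: "'v set"
  slot :: "'v \<Rightarrow> nat \<Rightarrow> 'b \<times> bool"

definition sheets :: "('f,'b,'v) foam \<Rightarrow> 'b \<Rightarrow> 'f set" where
  "sheets F b = {sm1 F b, sm2 F b, big F b}"

text \<open>Local model at a singular point, with compatible cyclic orderings and orientations: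
  facets fa = sm1 b1, fb = sm2 b1, fab = big b1, fc = sm2 b2, fabc = big b2, fbc = big b3,
  and bindings b1=(fa,fb,fab), b2=(fab,fc,fabc), b3=(fb,fc,fbc), b4=(fa,fbc,fabc) (all with
  the stored cyclic order); b1,b2 point in the same direction w.r.t. v, b3,b4 in the other.\<close>
definition singular_point_ok :: "('f,'b,'v) foam \<Rightarrow> 'v \<Rightarrow> bool" where
  "singular_point_ok F v \<longleftrightarrow>
     (let b1 = fst (slot F v 1); b2 = fst (slot F v 2);
          b3 = fst (slot F v 3); b4 = fst (slot F v 4) in
        sm1 F b2 = big F b1 \<and> sm1 F b3 = sm2 F b1 \<and> sm2 F b3 = sm2 F b2 \<and>
        sm1 F b4 = sm1 F b1 \<and> sm2 F b4 = big F b3 \<and> big F b4 = big F b2 \<and>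
        snd (slot F v 1) = snd (slot F v 2) \<and> snd (slot F v 3) = snd (slot F v 4) \<and>
        snd (slot F v 1) \<noteq> snd (slot F v 3))"

definition is_closed_foam :: "nat \<Rightarrow> ('f,'b,'v) foam \<Rightarrow> bool" where
  "is_closed_foam N F \<longleftrightarrow>
     1 \<le> N \<and> finite (facets F) \<and> finite (bindings F) \<and> finite (verts F) \<and>
     (\<forall>f\<in>facets F. lab F f \<le> N) \<and>
     (\<forall>b\<in>bindings F. sheets F b \<subseteq> facets F \<and>
         lab F (big F b) = lab F (sm1 F b) + lab F (sm2 F b)) \<and>
     bij_betw (\<lambda>(v,i). slot F v i) (verts F \<times> {1..4})
              ({b\<in>bindings F. \<not> circ F b} \<times> UNIV) \<and>
     (\<forall>v\<in>verts F. singular_point_ok F v)"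

definition coloring :: "nat \<Rightarrow> ('f,'b,'v) foam \<Rightarrow> ('f \<Rightarrow> nat set) \<Rightarrow> bool" where
  "coloring N F c \<longleftrightarrow>
     (\<forall>f\<in>facets F. c f \<subseteq> {1..N} \<and> card (c f) = lab F f) \<and>
     (\<forall>b\<in>bindings F. c (sm1 F b) \<union> c (sm2 F b) = c (big F b))"

definition in_Fi :: "('f \<Rightarrow> nat set) \<Rightarrow> nat \<Rightarrow> 'f \<Rightarrow> bool" where
  "in_Fi c i f \<longleftrightarrow> i \<in> c f"

definition in_Fij :: "('f \<Rightarrow> nat set) \<Rightarrow> nat \<Rightarrow> nat \<Rightarrow> 'f \<Rightarrow> bool" where
  "in_Fij c i j f \<longleftrightarrow> (i \<in> c f) \<noteq> (j \<in> c f)"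

text \<open>A binding lies in F_i(c) \<inter> F_j(c) \<inter> F_ij(c) (it lies in a surface iff one of its sheets does).\<close>
definition triple_binding :: "('f,'b,'v) foam \<Rightarrow> ('f \<Rightarrow> nat set) \<Rightarrow> nat \<Rightarrow> nat \<Rightarrow> 'b \<Rightarrow> bool" where
  "triple_binding F c i j b \<longleftrightarrow> b \<in> bindings F \<and>
     (\<exists>f\<in>sheets F b. in_Fi c i f) \<and> (\<exists>f\<in>sheets F b. in_Fi c j f) \<and>
     (\<exists>f\<in>sheets F b. in_Fij c i j f)"

text \<open>Positive w.r.t. (i,j), i<j: the facet containing i, the facet containing j and the facet
  containing both are in the cyclic order of the binding.\<close>
definition positive_binding :: "('f,'b,'v) foam \<Rightarrow> ('f \<Rightarrow> nat set) \<Rightarrow> nat \<Rightarrow> nat \<Rightarrow> 'b \<Rightarrow> bool" where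
  "positive_binding F c i j b \<longleftrightarrow>
     i \<in> c (sm1 F b) \<and> j \<in> c (sm2 F b) \<and> {i, j} \<subseteq> c (big F b)"

definition touches :: "('f,'b,'v) foam \<Rightarrow> 'v \<Rightarrow> 'b \<Rightarrow> bool" where
  "touches F v b \<longleftrightarrow> (\<exists>i\<in>{1..4::nat}. fst (slot F v i) = b)"

definition triple_adj :: "('f,'b,'v) foam \<Rightarrow> ('f \<Rightarrow> nat set) \<Rightarrow> nat \<Rightarrow> nat \<Rightarrow> ('b \<times> 'b) set" where
  "triple_adj F c i j = {(b, b'). triple_binding F c i j b \<and> triple_binding F c i j b' \<and>
       (\<exists>v\<in>verts F. touches F v b \<and> touches F v b')}"

text \<open>The circles of F_i(c) \<inter> F_j(c) \<inter> F_ij(c): connected components of the graph of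
  bindings in this intersection, adjacent when they share a singular point.\<close>
definition triple_circles :: "('f,'b,'v) foam \<Rightarrow> ('f \<Rightarrow> nat set) \<Rightarrow> nat \<Rightarrow> nat \<Rightarrow> 'b set set" where
  "triple_circles F c i j =
     (\<lambda>b. (triple_adj F c i j)\<^sup>* `` {b}) ` {b. triple_binding F c i j b}"

definition theta_plus :: "('f,'b,'v) foam \<Rightarrow> ('f \<Rightarrow> nat set) \<Rightarrow> nat \<Rightarrow> nat \<Rightarrow> nat" where
  "theta_plus F c i j =
     card {C \<in> triple_circles F c i j. \<forall>b\<in>C. positive_binding F c i j b}"

text \<open>Closed subsurface of F_ij(c): a set of facets of F_ij(c) which is a union of connected
  components (closed under adjacency of F_ij-facets along bindings).\<close>
definition closed_subsurface :: "('f,'b,'v) foam \<Rightarrow> ('f \<Rightarrow> nat set) \<Rightarrow> nat \<Rightarrow> nat \<Rightarrow> 'f set \<Rightarrow> bool" where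
  "closed_subsurface F c i j S \<longleftrightarrow>
     S \<subseteq> {f \<in> facets F. in_Fij c i j f} \<and>
     (\<forall>b\<in>bindings F. \<forall>f\<in>sheets F b. \<forall>g\<in>sheets F b.
        f \<in> S \<and> in_Fij c i j g \<longrightarrow> g \<in> S)"

definition swap_pigments :: "nat \<Rightarrow> nat \<Rightarrow> nat set \<Rightarrow> nat set" where
  "swap_pigments i j X = (\<lambda>x. if x = i then j else if x = j then i else x) ` X"

definition kempe_move :: "('f \<Rightarrow> nat set) \<Rightarrow> nat \<Rightarrow> nat \<Rightarrow> 'f set \<Rightarrow> ('f \<Rightarrow> nat set)" where
  "kempe_move c i j S = (\<lambda>f. if f \<in> S then swap_pigments i j (c f) else c f)"

end

theory Submission
  imports Defs "HOL-Combinatorics.Permutations"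
begin

text \<open>
  Fix a coloring \<open>c\<close> and \<open>i \<in> {1, 2}\<close>. Sending a binding that is positive w.r.t. \<open>(i, k)\<close> to the
  next binding of its circle in \<open>F\<^sub>i(c) \<inter> F\<^sub>k(c) \<inter> F\<^sub>i\<^sub>k(c)\<close>, read off at the singular point at
  its head, permutes these bindings, and the cycles of this permutation are the positive circles.
  Putting the cases \<open>i = 1\<close> and \<open>i = 2\<close> side by side as two layers gives a permutation \<open>\<sigma>\<^sub>c\<close> with
  \<open>\<theta>\<^sup>+\<^sub>1\<^sub>k + \<theta>\<^sup>+\<^sub>2\<^sub>k\<close> cycles, hence of sign \<open>(-1) ^ (n + \<theta>\<^sup>+\<^sub>1\<^sub>k + \<theta>\<^sup>+\<^sub>2\<^sub>k)\<close>, where \<open>n\<close> is the size of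
  its domain.

  The Kempe move exchanges 1 and 2 on the sheets of every binding meeting \<open>\<Sigma>\<close> and on all facets
  around every singular point meeting \<open>\<Sigma>\<close>. So conjugating \<open>\<sigma>\<^sub>c\<^sub>'\<close> by the exchange of the layers
  over the bindings meeting \<open>\<Sigma>\<close> gives back \<open>\<sigma>\<^sub>c\<close>, up to exchanges of layers at the ends of
  neutral bindings (no sheet in \<open>F\<^sub>1\<^sub>2\<close>) that lie at singular points meeting \<open>\<Sigma>\<close>. Positive bindings
  occupy an even number of slots at every singular point, so there is an even number of such ends:
  \<open>\<sigma>\<^sub>c\<close> and \<open>\<sigma>\<^sub>c\<^sub>'\<close> have the same sign and domains of the same size, and the parities agree.
\<close>

section \<open>Cycles of a permutation and its sign\<close>

definition graph_on :: "'a set \<Rightarrow> ('a \<Rightarrow> 'a) \<Rightarrow> ('a \<times> 'a) set" where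
  "graph_on A s = {(x, s x) | x. x \<in> A}"

definition cycle_rel :: "'a set \<Rightarrow> ('a \<Rightarrow> 'a) \<Rightarrow> ('a \<times> 'a) set" where
  "cycle_rel A s = (graph_on A s \<union> (graph_on A s)\<inverse>)\<^sup>*"

definition num_cycles :: "'a set \<Rightarrow> ('a \<Rightarrow> 'a) \<Rightarrow> nat" where
  "num_cycles A s = card ((\<lambda>x. cycle_rel A s `` {x}) ` A)"

lemma graph_on_iff [simp]: "(a, b) \<in> graph_on A s \<longleftrightarrow> a \<in> A \<and> b = s a"
  unfolding graph_on_def by blast

lemma cycle_rel_refl [simp]: "(a, a) \<in> cycle_rel A s"
  unfolding cycle_rel_def by blast

lemma cycle_rel_step: "a \<in> A \<Longrightarrow> (a, s a) \<in> cycle_rel A s"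
  unfolding cycle_rel_def by (intro r_into_rtrancl) simp

lemma cycle_rel_sym: "(a, b) \<in> cycle_rel A s \<Longrightarrow> (b, a) \<in> cycle_rel A s"
  unfolding cycle_rel_def by (rule symD[OF sym_rtrancl]) (auto simp: sym_def)

lemma cycle_rel_trans:
  "(a, b) \<in> cycle_rel A s \<Longrightarrow> (b, d) \<in> cycle_rel A s \<Longrightarrow> (a, d) \<in> cycle_rel A s"
  unfolding cycle_rel_def by (rule rtrancl_trans)

lemma cycle_rel_class_eq: "(a, b) \<in> cycle_rel A s \<Longrightarrow> cycle_rel A s `` {a} = cycle_rel A s `` {b}"
  by (auto intro: cycle_rel_trans cycle_rel_sym)

lemma cycle_rel_cases: "(a, b) \<in> cycle_rel A s \<Longrightarrow> b = a \<or> b \<in> A \<union> s ` A"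
  unfolding cycle_rel_def by (erule rtranclE) auto

lemma cycle_rel_map:
  assumes edge: "\<And>x. x \<in> A \<Longrightarrow> (g x, g (s x)) \<in> cycle_rel B t"
    and ab: "(a, b) \<in> cycle_rel A s"
  shows "(g a, g b) \<in> cycle_rel B t"
  using ab unfolding cycle_rel_def[of A s]
proof (induction rule: rtrancl_induct)
  case (step b d)
  from step.hyps(2) have "(g b, g d) \<in> cycle_rel B t"
    by (auto intro: edge cycle_rel_sym)
  with step.IH show ?case by (rule cycle_rel_trans)
qed simp

lemma cycle_rel_subset_rtrancl:
  assumes "\<And>x. x \<in> A \<Longrightarrow> (x, s x) \<in> R\<^sup>*" "\<And>x. x \<in> A \<Longrightarrow> (s x, x) \<in> R\<^sup>*"
  shows "cycle_rel A s \<subseteq> R\<^sup>*"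
  unfolding cycle_rel_def by (rule rtrancl_subset_rtrancl) (use assms in auto)

lemma cycle_rel_stays:
  assumes ab: "(a, b) \<in> cycle_rel A s" and "a \<in> X"
    and closed: "\<And>x. x \<in> A \<Longrightarrow> x \<in> X \<longleftrightarrow> s x \<in> X"
  shows "b \<in> X"
  using ab \<open>a \<in> X\<close> unfolding cycle_rel_def
  by (induction rule: rtrancl_induct) (auto simp: closed)

lemma cycle_rel_Un_class:
  assumes "X \<inter> Y = {}" "s ` X \<subseteq> X" "s ` Y \<subseteq> Y" and a: "a \<in> X"
  shows "cycle_rel (X \<union> Y) s `` {a} = cycle_rel X s `` {a}"
    and "cycle_rel (X \<union> Y) s `` {a} \<subseteq> X"
proof -
  have closed: "x \<in> X \<longleftrightarrow> s x \<in> X" if "x \<in> X \<union> Y" for x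
    using that assms by blast
  show sub: "cycle_rel (X \<union> Y) s `` {a} \<subseteq> X"
    using cycle_rel_stays[OF _ a closed] by blast
  have "(a, b) \<in> cycle_rel X s" if "(a, b) \<in> cycle_rel (X \<union> Y) s" for b
  proof -
    let ?g = "\<lambda>x. if x \<in> X then x else a"
    have "(?g a, ?g b) \<in> cycle_rel X s"
      by (rule cycle_rel_map[OF _ that]) (use closed cycle_rel_step in auto)
    then show ?thesis using sub that a by auto
  qed
  moreover have "(a, b) \<in> cycle_rel (X \<union> Y) s" if "(a, b) \<in> cycle_rel X s" for b
    using cycle_rel_map[where g = id, OF _ that] by (simp add: cycle_rel_step)
  ultimately show "cycle_rel (X \<union> Y) s `` {a} = cycle_rel X s `` {a}" by blast
qed

lemma num_cycles_Un:
  assumes fin: "finite A" "finite B" and disj: "A \<inter> B = {}"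
    and inv: "s ` A \<subseteq> A" "s ` B \<subseteq> B"
  shows "num_cycles (A \<union> B) s = num_cycles A s + num_cycles B s"
proof -
  let ?cls = "\<lambda>X x. cycle_rel X s `` {x}"
  have disj': "B \<inter> A = {}" using disj by blast
  note A_class = cycle_rel_Un_class[OF disj inv]
    and B_class = cycle_rel_Un_class[OF disj' inv(2,1), unfolded Un_commute[of B]]
  have "?cls (A \<union> B) ` (A \<union> B) = ?cls A ` A \<union> ?cls B ` B"
    using A_class(1) B_class(1) by (auto simp: image_Un)
  moreover have "?cls A ` A \<inter> ?cls B ` B = {}"
    using A_class B_class disj by fastforce
  ultimately show ?thesis
    unfolding num_cycles_def using fin by (simp add: card_Un_disjoint)
qed

lemma num_cycles_remove_fixpoint:
  assumes "finite A" and p: "s permutes A" and "x \<in> A" "s x = x"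
  shows "num_cycles A s = Suc (num_cycles (A - {x}) s)"
proof -
  have "s ` (A - {x}) \<subseteq> A - {x}"
    using permutes_inj[OF p] permutes_in_image[OF p] \<open>s x = x\<close> by (auto dest: injD)
  moreover have "num_cycles {x} s = 1"
    by (simp add: num_cycles_def)
  moreover have "A = (A - {x}) \<union> {x}"
    using \<open>x \<in> A\<close> by blast
  ultimately show ?thesis
    using num_cycles_Un[of "A - {x}" "{x}" s] \<open>finite A\<close> \<open>s x = x\<close> by simp
qed

lemma remove_point_permutes:
  assumes p: "s permutes A" and "x \<in> A"
  shows "transpose x (s x) \<circ> s permutes A - {x}"
proof -
  have "transpose x (s x) \<circ> s permutes A"
    using p \<open>x \<in> A\<close> by (simp add: permutes_compose permutes_swap_id permutes_in_image)
  then show ?thesis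
    by (rule permutes_superset) simp
qed

text \<open>\<open>transpose x (s x) \<circ> s\<close> is \<open>s\<close> with \<open>x\<close> cut out of its cycle: it fixes \<open>x\<close> and sends
  the predecessor of \<open>x\<close> to \<open>s x\<close>.\<close>

lemma remove_point_cycle_class:
  assumes p: "s permutes A" and x: "x \<in> A" "s x \<noteq> x" and u: "u \<in> A - {x}"
  defines "r \<equiv> transpose x (s x) \<circ> s"
  shows "cycle_rel (A - {x}) r `` {u} = cycle_rel A s `` {u} - {x}"
proof -
  obtain y where y: "y \<in> A" "s y = x" using permutes_image[OF p] x(1) by (metis imageE)
  have "y \<noteq> x" using y x by metis
  have r_y: "r y = s x" unfolding r_def using y by simp
  have r_other: "r z = s z" if "z \<noteq> x" "z \<noteq> y" for z
    using that y permutes_inj[OF p] unfolding r_def by (auto simp: transpose_def dest: injD)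
  have r_edge: "(z, r z) \<in> cycle_rel A s" if "z \<in> A - {x}" for z
  proof (cases "z = y")
    case True
    have "(y, s y) \<in> cycle_rel A s" "(x, s x) \<in> cycle_rel A s"
      using y(1) x(1) by (simp_all add: cycle_rel_step)
    then show ?thesis
      using True y(2) r_y by (auto intro: cycle_rel_trans)
  qed (use that r_other cycle_rel_step in auto)
  define \<phi> where "\<phi> z = (if z = x then s x else z)" for z
  have s_edge: "(\<phi> a, \<phi> (s a)) \<in> cycle_rel (A - {x}) r" if "a \<in> A" for a
  proof -
    consider "a = x" | "a = y" | "a \<noteq> x" "a \<noteq> y" by blast
    then show ?thesis
    proof cases
      case 2
      then show ?thesis using cycle_rel_step[of y "A - {x}" r] y \<open>y \<noteq> x\<close> r_y
        unfolding \<phi>_def by simp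
    next
      case 3
      then have "s a \<noteq> x" using y permutes_inj[OF p] by (auto dest: injD)
      then show ?thesis using 3 cycle_rel_step[of a "A - {x}" r] that r_other
        unfolding \<phi>_def by simp
    qed (use x(2) in \<open>simp add: \<phi>_def\<close>)
  qed
  show ?thesis
  proof (intro equalityI subsetI)
    fix w assume "w \<in> cycle_rel (A - {x}) r `` {u}"
    then have uw: "(u, w) \<in> cycle_rel (A - {x}) r" by simp
    have "w \<noteq> x"
      using cycle_rel_cases[OF uw] u permutes_image[OF remove_point_permutes[OF p x(1)]]
      unfolding r_def by auto
    with cycle_rel_map[where g = id, OF _ uw] r_edge show "w \<in> cycle_rel A s `` {u} - {x}"
      by simp
  next
    fix w assume w: "w \<in> cycle_rel A s `` {u} - {x}"
    have "(\<phi> u, \<phi> w) \<in> cycle_rel (A - {x}) r"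
      by (rule cycle_rel_map[where g = \<phi>, OF s_edge]) (use w in auto)
    then show "w \<in> cycle_rel (A - {x}) r `` {u}" using u w unfolding \<phi>_def by simp
  qed
qed

lemma num_cycles_remove_point:
  assumes p: "s permutes A" and x: "x \<in> A" "s x \<noteq> x"
  shows "num_cycles A s = num_cycles (A - {x}) (transpose x (s x) \<circ> s)"
proof -
  let ?cls_s = "\<lambda>u. cycle_rel A s `` {u}"
    and ?cls_r = "\<lambda>u. cycle_rel (A - {x}) (transpose x (s x) \<circ> s) `` {u}"
  have "?cls_s x = ?cls_s (s x)"
    using cycle_rel_class_eq[OF cycle_rel_step[OF x(1)]] .
  then have "?cls_s ` A = ?cls_s ` (A - {x})"
    using x permutes_in_image[OF p] by (auto simp: image_iff)
  moreover have "?cls_r ` (A - {x}) = (\<lambda>K. K - {x}) ` ?cls_s ` (A - {x})"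
    using remove_point_cycle_class[OF p x] by (auto simp: image_iff)
  moreover have "inj_on (\<lambda>K. K - {x}) (?cls_s ` (A - {x}))"
  proof (rule inj_onI)
    fix K1 K2 assume K: "K1 \<in> ?cls_s ` (A - {x})" "K2 \<in> ?cls_s ` (A - {x})" "K1 - {x} = K2 - {x}"
    then obtain u1 u2 where u: "u1 \<in> A - {x}" "K1 = ?cls_s u1" "K2 = ?cls_s u2"
      by blast
    then have "u1 \<in> K1 - {x}" by simp
    then have "(u2, u1) \<in> cycle_rel A s" using K(3) u(3) by simp
    then show "K1 = K2" using u(2,3) by (simp add: cycle_rel_class_eq)
  qed
  ultimately show ?thesis
    unfolding num_cycles_def by (simp add: card_image)
qed

lemma sign_num_cycles:
  assumes "finite A" "s permutes A"
  shows "sign s = (-1::int) ^ (card A + num_cycles A s)"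
  using assms
proof (induction "card A" arbitrary: A s rule: less_induct)
  case less
  show ?case
  proof (cases "A = {}")
    case True
    then show ?thesis using less.prems by (simp add: num_cycles_def)
  next
    case False
    then obtain x where x: "x \<in> A" by blast
    have card_A: "card A = Suc (card (A - {x}))"
      using card_Suc_Diff1[OF less.prems(1) x] by simp
    have smaller: "card (A - {x}) < card A"
      using card_Diff1_less[OF less.prems(1) x] .
    show ?thesis
    proof (cases "s x = x")
      case True
      have "s permutes A - {x}"
        by (rule permutes_superset[OF less.prems(2)]) (use True in auto)
      then have "sign s = (-1::int) ^ (card (A - {x}) + num_cycles (A - {x}) s)"
        using less.hyps[OF smaller] less.prems(1) by simp
      then show ?thesis
        using card_A num_cycles_remove_fixpoint[OF less.prems x True] by simp
    next
      case False
      define r where "r = transpose x (s x) \<circ> s"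
      have "sign r = (-1::int) ^ (card (A - {x}) + num_cycles (A - {x}) r)"
        using less.hyps[OF smaller _ remove_point_permutes[OF less.prems(2) x, folded r_def]]
          less.prems(1) by simp
      moreover have "sign r = - sign s"
      proof -
        have "permutation s" using less.prems permutation_permutes by blast
        then show ?thesis
          using False unfolding r_def by (simp add: sign_compose permutation_swap_id sign_swap_id)
      qed
      ultimately show ?thesis
        using card_A num_cycles_remove_point[OF less.prems(2) x False, folded r_def] by simp
    qed
  qed
qed

lemma num_cycles_parity:
  assumes "finite A" "s permutes A" "finite B" "t permutes B"
    and "card A = card B" "sign s = sign t"
  shows "even (num_cycles A s) \<longleftrightarrow> even (num_cycles B t)"
proof -
  have "(-1::int) ^ (card A + num_cycles A s) = (-1) ^ (card A + num_cycles B t)"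
    using sign_num_cycles[OF assms(1,2)] sign_num_cycles[OF assms(3,4)] assms(5,6) by simp
  then show ?thesis
    by (auto simp: minus_one_power_iff split: if_splits)
qed

lemma num_cycles_image:
  assumes "inj g" and conj: "\<And>x. x \<in> A \<Longrightarrow> t (g x) = g (s x)"
  shows "num_cycles (g ` A) t = num_cycles A s"
proof -
  have classes: "cycle_rel (g ` A) t `` {g a} = g ` (cycle_rel A s `` {a})" for a
  proof (intro equalityI subsetI)
    fix w assume "w \<in> cycle_rel (g ` A) t `` {g a}"
    then have gw: "(g a, w) \<in> cycle_rel (g ` A) t" by simp
    then obtain b where "w = g b"
      using cycle_rel_cases[OF gw] conj by auto
    have "(inv g (g a), inv g w) \<in> cycle_rel A s"
      by (rule cycle_rel_map[OF _ gw]) (use \<open>inj g\<close> conj in \<open>auto simp: cycle_rel_step\<close>)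
    then show "w \<in> g ` (cycle_rel A s `` {a})"
      using \<open>inj g\<close> \<open>w = g b\<close> by simp
  next
    fix w assume "w \<in> g ` (cycle_rel A s `` {a})"
    then obtain b where b: "w = g b" "(a, b) \<in> cycle_rel A s" by blast
    have "(g a, g b) \<in> cycle_rel (g ` A) t"
      by (rule cycle_rel_map[OF _ b(2)]) (simp add: cycle_rel_step flip: conj)
    then show "w \<in> cycle_rel (g ` A) t `` {g a}"
      using b(1) by simp
  qed
  have "(\<lambda>x. cycle_rel (g ` A) t `` {x}) ` g ` A = image g ` (\<lambda>x. cycle_rel A s `` {x}) ` A"
    unfolding image_image classes ..
  moreover have "inj_on (image g) X" for X
    using \<open>inj g\<close> by (simp add: inj_on_def inj_image_eq_iff)
  ultimately show ?thesis
    unfolding num_cycles_def by (simp add: card_image)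
qed

section \<open>Exchanging the pigments 1 and 2\<close>

definition flip12 :: "bool \<Rightarrow> nat \<Rightarrow> nat" where
  "flip12 fl = (if fl then transpose 1 2 else id)"

definition swap_layers :: "'a set \<Rightarrow> 'a \<times> nat \<Rightarrow> 'a \<times> nat" where
  "swap_layers M x = (fst x, flip12 (fst x \<in> M) (snd x))"

lemma flip12_False [simp]: "flip12 False j = j"
  by (simp add: flip12_def)

lemma flip12_flip12: "flip12 a (flip12 b j) = flip12 (a \<noteq> b) j"
  by (simp add: flip12_def)

lemma flip12_in_12: "flip12 fl j \<in> {1, 2} \<longleftrightarrow> j \<in> {1, 2}"
  by (auto simp: flip12_def transpose_def)

lemma flip12_other: "j \<notin> {1, 2} \<Longrightarrow> flip12 fl j = j"
  by (simp add: flip12_def)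

lemma swap_layers_apply [simp]: "swap_layers M (b, j) = (b, flip12 (b \<in> M) j)"
  by (simp add: swap_layers_def)

lemma swap_layers_involutory [simp]: "swap_layers M (swap_layers M x) = x"
  by (cases x) (simp add: flip12_flip12)

lemma swap_layers_insert:
  "a \<notin> M \<Longrightarrow> swap_layers (insert a M) = transpose (a, 1) (a, 2) \<circ> swap_layers M"
  by (rule ext) (auto simp: swap_layers_def flip12_def transpose_def)

lemma sign_swap_layers:
  assumes "finite M"
  shows "permutation (swap_layers M) \<and> sign (swap_layers M) = (-1::int) ^ card M"
  using assms
proof (induction rule: finite_induct)
  case empty
  have "swap_layers {} = (id :: 'a \<times> nat \<Rightarrow> 'a \<times> nat)"
    by (rule ext) (simp add: swap_layers_def)
  then show ?case by (simp add: permutation_id sign_id)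
next
  case (insert a M)
  then have "permutation (swap_layers M)" by simp
  then show ?case
    using insert unfolding swap_layers_insert[OF insert(2)]
    by (simp only: permutation_compose permutation_swap_id sign_compose) (simp add: sign_swap_id)
qed

lemma swap_pigments_12: "swap_pigments 1 2 X = transpose 1 2 ` X"
  unfolding swap_pigments_def transpose_def ..

lemma mem_flip12_image: "x \<in> flip12 fl ` X \<longleftrightarrow> flip12 fl x \<in> X"
  by (auto simp: flip12_def in_transpose_image_iff)

lemma flip12_image_neutral: "(1 \<in> X \<longleftrightarrow> 2 \<in> X) \<Longrightarrow> flip12 fl ` X = X"
  by (simp add: flip12_def)

lemma flip12_image_eq_iff:
  assumes "(1 \<in> X) \<noteq> (2 \<in> X)"
  shows "flip12 a ` X = flip12 b ` X \<longleftrightarrow> a = b"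
proof
  assume "flip12 a ` X = flip12 b ` X"
  then have "flip12 a 1 \<in> X \<longleftrightarrow> flip12 b 1 \<in> X"
    by (metis mem_flip12_image)
  then show "a = b"
    using assms by (cases a; cases b) (simp_all add: flip12_def)
qed simp

lemma flip12_binding_iff:
  assumes flip: "\<And>f. f \<in> sheets F b \<Longrightarrow> col' f = flip12 fl ` col f" and k: "k \<notin> {1, 2}"
  shows "triple_binding F col' j k b \<longleftrightarrow> triple_binding F col (flip12 fl j) k b"
    and "positive_binding F col' j k b \<longleftrightarrow> positive_binding F col (flip12 fl j) k b"
proof -
  have "x \<in> col' f \<longleftrightarrow> flip12 fl x \<in> col f" if "f \<in> sheets F b" for x f
    using flip[OF that] by (simp add: mem_flip12_image)
  moreover have "flip12 fl k = k"
    using k by (rule flip12_other)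
  ultimately have "x \<in> col' f \<longleftrightarrow> flip12 fl x \<in> col f" "k \<in> col' f \<longleftrightarrow> k \<in> col f"
    if "f \<in> {sm1 F b, sm2 F b, big F b}" for x f
    using that unfolding sheets_def by metis+
  then show "triple_binding F col' j k b \<longleftrightarrow> triple_binding F col (flip12 fl j) k b"
    and "positive_binding F col' j k b \<longleftrightarrow> positive_binding F col (flip12 fl j) k b"
    unfolding triple_binding_def positive_binding_def sheets_def in_Fi_def in_Fij_def by simp_all
qed

section \<open>Circles of positive bindings\<close>

lemma one_to_four: "{1..4::nat} = {1, 2, 3, 4}"
  by auto

locale closed_foam =
  fixes F :: "('f, 'b, 'v) foam" and N :: nat
  assumes closed_foam: "is_closed_foam N F"
begin

lemma finite_bindings: "finite (bindings F)"
  and finite_verts: "finite (verts F)"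
  and bij_slot: "bij_betw (\<lambda>(v, i). slot F v i) (verts F \<times> {1..4})
                   ({b \<in> bindings F. \<not> circ F b} \<times> UNIV)"
  and verts_ok: "v \<in> verts F \<Longrightarrow> singular_point_ok F v"
  and sheets_subset: "b \<in> bindings F \<Longrightarrow> sheets F b \<subseteq> facets F"
  and lab_big: "b \<in> bindings F \<Longrightarrow> lab F (big F b) = lab F (sm1 F b) + lab F (sm2 F b)"
  using closed_foam unfolding is_closed_foam_def by blast+

lemma slot_binding:
  assumes "v \<in> verts F" "i \<in> {1..4}"
  shows "fst (slot F v i) \<in> bindings F" and "\<not> circ F (fst (slot F v i))"
  using bij_betw_apply[OF bij_slot, of "(v, i)"] assms by auto

lemma slot_orientation:
  assumes "v \<in> verts F"
  shows "snd (slot F v 1) = snd (slot F v 2)" "snd (slot F v 3) = snd (slot F v 4)"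
    "snd (slot F v 1) \<noteq> snd (slot F v 3)"
  using verts_ok[OF assms] unfolding singular_point_ok_def Let_def by blast+

lemma coloring_disjoint:
  assumes col: "coloring N F col" and b: "b \<in> bindings F"
  shows "col (sm1 F b) \<inter> col (sm2 F b) = {}"
proof -
  have facets: "sm1 F b \<in> facets F" "sm2 F b \<in> facets F" "big F b \<in> facets F"
    using sheets_subset[OF b] unfolding sheets_def by auto
  have card: "card (col f) = lab F f" and fin: "finite (col f)" if "f \<in> facets F" for f
    using col that finite_subset[of "col f" "{1..N}"] unfolding coloring_def by auto
  have "col (sm1 F b) \<union> col (sm2 F b) = col (big F b)"
    using col b unfolding coloring_def by blast
  then have "card (col (sm1 F b) \<union> col (sm2 F b)) = card (col (sm1 F b)) + card (col (sm2 F b))"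
    using facets card lab_big[OF b] by simp
  then show ?thesis
    using card_Un_Int[of "col (sm1 F b)" "col (sm2 F b)"] facets fin by simp
qed

lemma coloring_big:
  "coloring N F col \<Longrightarrow> b \<in> bindings F \<Longrightarrow> col (big F b) = col (sm1 F b) \<union> col (sm2 F b)"
  unfolding coloring_def by blast

lemma triple_binding_iff:
  assumes "coloring N F col" "b \<in> bindings F" "i \<noteq> j"
  shows "triple_binding F col i j b \<longleftrightarrow>
     (i \<in> col (sm1 F b) \<and> j \<in> col (sm2 F b)) \<or> (j \<in> col (sm1 F b) \<and> i \<in> col (sm2 F b))"
  using assms coloring_disjoint[OF assms(1,2)] coloring_big[OF assms(1,2)]
  unfolding triple_binding_def sheets_def in_Fi_def in_Fij_def by auto

lemma positive_binding_iff:
  assumes "coloring N F col" "b \<in> bindings F"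
  shows "positive_binding F col i j b \<longleftrightarrow> i \<in> col (sm1 F b) \<and> j \<in> col (sm2 F b)"
  using coloring_big[OF assms] unfolding positive_binding_def by auto

lemma positive_imp_triple:
  "coloring N F col \<Longrightarrow> b \<in> bindings F \<Longrightarrow> i \<noteq> j \<Longrightarrow> positive_binding F col i j b \<Longrightarrow>
    triple_binding F col i j b"
  by (simp add: triple_binding_iff positive_binding_iff)

lemma vertex_model:
  assumes col: "coloring N F col" and v: "v \<in> verts F"
  obtains fa fb fc fab fbc fabc where
    "sm1 F (fst (slot F v 1)) = fa" "sm2 F (fst (slot F v 1)) = fb" "big F (fst (slot F v 1)) = fab"
    "sm1 F (fst (slot F v 2)) = fab" "sm2 F (fst (slot F v 2)) = fc" "big F (fst (slot F v 2)) = fabc"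
    "sm1 F (fst (slot F v 3)) = fb" "sm2 F (fst (slot F v 3)) = fc" "big F (fst (slot F v 3)) = fbc"
    "sm1 F (fst (slot F v 4)) = fa" "sm2 F (fst (slot F v 4)) = fbc" "big F (fst (slot F v 4)) = fabc"
    "col fab = col fa \<union> col fb" "col fbc = col fb \<union> col fc" "col fabc = col fa \<union> col fb \<union> col fc"
    "col fa \<inter> col fb = {}" "col fa \<inter> col fc = {}" "col fb \<inter> col fc = {}"
proof -
  define b1 b2 b3 b4 where "b1 = fst (slot F v 1)" "b2 = fst (slot F v 2)"
    "b3 = fst (slot F v 3)" "b4 = fst (slot F v 4)"
  have bs: "b1 \<in> bindings F" "b2 \<in> bindings F" "b3 \<in> bindings F" "b4 \<in> bindings F"
    unfolding b1_b2_b3_b4_def using slot_binding(1)[OF v] by auto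
  have model: "sm1 F b2 = big F b1" "sm1 F b3 = sm2 F b1" "sm2 F b3 = sm2 F b2"
    "sm1 F b4 = sm1 F b1" "sm2 F b4 = big F b3" "big F b4 = big F b2"
    using verts_ok[OF v] unfolding singular_point_ok_def b1_b2_b3_b4_def Let_def by blast+
  note disj = coloring_disjoint[OF col] and un = coloring_big[OF col]
  show thesis
    by (rule that[of "sm1 F b1" "sm2 F b1" "big F b1" "sm2 F b2" "big F b2" "big F b3",
          unfolded b1_b2_b3_b4_def[symmetric]])
      (use model disj[OF bs(1)] disj[OF bs(2)] disj[OF bs(3)] un[OF bs(1)] un[OF bs(2)] un[OF bs(3)]
        in auto)
qed

lemma vertex_triples:
  assumes col: "coloring N F col" and v: "v \<in> verts F" and "i \<noteq> j"
  defines "t \<equiv> \<lambda>s. triple_binding F col i j (fst (slot F v s))"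
    and "q \<equiv> \<lambda>s. positive_binding F col i j (fst (slot F v s))"
  shows "(\<not> t 1 \<and> \<not> t 2 \<and> \<not> t 3 \<and> \<not> t 4) \<or> (t 1 \<noteq> t 2 \<and> t 3 \<noteq> t 4)"
    and "\<And>s s'. s \<in> {1, 2} \<Longrightarrow> s' \<in> {3, 4} \<Longrightarrow> t s \<Longrightarrow> t s' \<Longrightarrow> q s \<longleftrightarrow> q s'"
proof -
  obtain fa fb fc fab fbc fabc where model:
    "sm1 F (fst (slot F v 1)) = fa" "sm2 F (fst (slot F v 1)) = fb"
    "sm1 F (fst (slot F v 2)) = fab" "sm2 F (fst (slot F v 2)) = fc"
    "sm1 F (fst (slot F v 3)) = fb" "sm2 F (fst (slot F v 3)) = fc"
    "sm1 F (fst (slot F v 4)) = fa" "sm2 F (fst (slot F v 4)) = fbc"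
    "col fab = col fa \<union> col fb" "col fbc = col fb \<union> col fc"
    "col fa \<inter> col fb = {}" "col fa \<inter> col fc = {}" "col fb \<inter> col fc = {}"
    using vertex_model[OF col v] by metis
  have bs: "fst (slot F v s) \<in> bindings F" if "s \<in> {1, 2, 3, 4}" for s
    using slot_binding(1)[OF v] that by auto
  have "t s = ((i \<in> col (sm1 F (fst (slot F v s))) \<and> j \<in> col (sm2 F (fst (slot F v s))))
      \<or> (j \<in> col (sm1 F (fst (slot F v s))) \<and> i \<in> col (sm2 F (fst (slot F v s)))))"
    and "q s = (i \<in> col (sm1 F (fst (slot F v s))) \<and> j \<in> col (sm2 F (fst (slot F v s))))"
    if "s \<in> {1, 2, 3, 4}" for s
    unfolding t_def q_def using triple_binding_iff[OF col bs[OF that] \<open>i \<noteq> j\<close>]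
      positive_binding_iff[OF col bs[OF that]] by simp_all
  then have tq: "t 1 = ((i \<in> col fa \<and> j \<in> col fb) \<or> (j \<in> col fa \<and> i \<in> col fb))"
    "t 2 = ((i \<in> col fab \<and> j \<in> col fc) \<or> (j \<in> col fab \<and> i \<in> col fc))"
    "t 3 = ((i \<in> col fb \<and> j \<in> col fc) \<or> (j \<in> col fb \<and> i \<in> col fc))"
    "t 4 = ((i \<in> col fa \<and> j \<in> col fbc) \<or> (j \<in> col fa \<and> i \<in> col fbc))"
    "q 1 = (i \<in> col fa \<and> j \<in> col fb)" "q 2 = (i \<in> col fab \<and> j \<in> col fc)"
    "q 3 = (i \<in> col fb \<and> j \<in> col fc)" "q 4 = (i \<in> col fa \<and> j \<in> col fbc)"
    using model by simp_all
  show "(\<not> t 1 \<and> \<not> t 2 \<and> \<not> t 3 \<and> \<not> t 4) \<or> (t 1 \<noteq> t 2 \<and> t 3 \<noteq> t 4)"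
    unfolding tq using model(9-) \<open>i \<noteq> j\<close> by blast
  have "(t 1 \<longrightarrow> t 3 \<longrightarrow> q 1 = q 3) \<and> (t 1 \<longrightarrow> t 4 \<longrightarrow> q 1 = q 4) \<and>
      (t 2 \<longrightarrow> t 3 \<longrightarrow> q 2 = q 3) \<and> (t 2 \<longrightarrow> t 4 \<longrightarrow> q 2 = q 4)"
    unfolding tq using model(9-) \<open>i \<noteq> j\<close> by blast
  then show "q s \<longleftrightarrow> q s'" if "s \<in> {1, 2}" "s' \<in> {3, 4}" "t s" "t s'" for s s'
    using that by auto
qed

lemma positive_slots_iff:
  assumes col: "coloring N F col" and v: "v \<in> verts F" and "i \<noteq> j"
    and s: "s \<in> {1..4}" "triple_binding F col i j (fst (slot F v s))"
    and s': "s' \<in> {1..4}" "triple_binding F col i j (fst (slot F v s'))"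
  shows "positive_binding F col i j (fst (slot F v s)) \<longleftrightarrow>
    positive_binding F col i j (fst (slot F v s'))"
proof -
  note triples = vertex_triples[OF col v \<open>i \<noteq> j\<close>]
  from triples(1) s s' have "s = s' \<or> (s \<in> {1, 2} \<and> s' \<in> {3, 4}) \<or> (s' \<in> {1, 2} \<and> s \<in> {3, 4})"
    unfolding one_to_four by auto
  then show ?thesis
    using triples(2) s(2) s'(2) by blast
qed

definition triple_slot :: "('f \<Rightarrow> nat set) \<Rightarrow> nat \<Rightarrow> nat \<Rightarrow> 'v \<Rightarrow> bool \<Rightarrow> nat" where
  "triple_slot col i j v e =
     (THE s. s \<in> {1..4} \<and> triple_binding F col i j (fst (slot F v s)) \<and> snd (slot F v s) = e)"

lemma triple_slot_ex1:
  assumes col: "coloring N F col" and v: "v \<in> verts F" and "i \<noteq> j"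
    and s0: "s0 \<in> {1..4}" "triple_binding F col i j (fst (slot F v s0))"
  shows "\<exists>!s. s \<in> {1..4} \<and> triple_binding F col i j (fst (slot F v s)) \<and> snd (slot F v s) = e"
proof -
  let ?t = "\<lambda>s. triple_binding F col i j (fst (slot F v s))"
  have t: "?t 1 \<noteq> ?t 2" "?t 3 \<noteq> ?t 4"
    using vertex_triples(1)[OF col v \<open>i \<noteq> j\<close>] s0 unfolding one_to_four by auto
  note orientation = slot_orientation[OF v]
  show ?thesis
  proof (rule ex1I)
    let ?s = "if snd (slot F v 1) = e then (if ?t 1 then 1 else 2) else (if ?t 3 then 3 else 4 :: nat)"
    show "?s \<in> {1..4} \<and> ?t ?s \<and> snd (slot F v ?s) = e"
      using t orientation by auto
    show "s = ?s" if "s \<in> {1..4} \<and> ?t s \<and> snd (slot F v s) = e" for s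
      using that t orientation unfolding one_to_four by auto
  qed
qed

lemma triple_slot:
  assumes "coloring N F col" "v \<in> verts F" "i \<noteq> j"
    and "s0 \<in> {1..4}" "triple_binding F col i j (fst (slot F v s0))"
  shows "triple_slot col i j v e \<in> {1..4}"
    and "triple_binding F col i j (fst (slot F v (triple_slot col i j v e)))"
    and "snd (slot F v (triple_slot col i j v e)) = e"
  using theI'[OF triple_slot_ex1[OF assms]] unfolding triple_slot_def by blast+

lemma triple_slot_eqI:
  assumes "coloring N F col" "v \<in> verts F" "i \<noteq> j"
    and "s \<in> {1..4}" "triple_binding F col i j (fst (slot F v s))" "snd (slot F v s) = e"
  shows "triple_slot col i j v e = s"
  unfolding triple_slot_def by (rule the1_equality[OF triple_slot_ex1]) (use assms in auto)

definition end_slot :: "'b \<Rightarrow> bool \<Rightarrow> 'v \<times> nat" where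
  "end_slot b e = inv_into (verts F \<times> {1..4}) (\<lambda>(v, i). slot F v i) (b, e)"

lemma end_slot:
  assumes "b \<in> bindings F" "\<not> circ F b"
  shows "end_slot b e \<in> verts F \<times> {1..4}"
    and "slot F (fst (end_slot b e)) (snd (end_slot b e)) = (b, e)"
proof -
  have img: "(b, e) \<in> (\<lambda>(v, i). slot F v i) ` (verts F \<times> {1..4})"
    using bij_slot assms by (simp add: bij_betw_def)
  then show "end_slot b e \<in> verts F \<times> {1..4}"
    unfolding end_slot_def by (rule inv_into_into)
  have "(\<lambda>(v, i). slot F v i) (end_slot b e) = (b, e)"
    unfolding end_slot_def using img by (rule f_inv_into_f)
  then show "slot F (fst (end_slot b e)) (snd (end_slot b e)) = (b, e)"
    by (simp add: case_prod_beta)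
qed

lemma end_slot_eqI:
  assumes "v \<in> verts F" "s \<in> {1..4}" "slot F v s = (b, e)"
  shows "end_slot b e = (v, s)"
  using inv_into_f_f[OF bij_betw_imp_inj_on[OF bij_slot], of "(v, s)"] assms
  unfolding end_slot_def by simp

text \<open>The circle through \<open>b\<close> leaves \<open>b\<close> at its head \<open>v\<close> and continues along the only other triple
  binding at \<open>v\<close>, which has its tail there.\<close>

definition next_binding :: "('f \<Rightarrow> nat set) \<Rightarrow> nat \<Rightarrow> nat \<Rightarrow> 'b \<Rightarrow> 'b" where
  "next_binding col i j b =
     (if circ F b then b
      else let v = fst (end_slot b True) in fst (slot F v (triple_slot col i j v False)))"

lemma next_binding_slot:
  assumes col: "coloring N F col" and v: "v \<in> verts F" and "i \<noteq> j"
    and s: "s \<in> {1..4}" "triple_binding F col i j (fst (slot F v s))" "snd (slot F v s)"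
    and s': "s' \<in> {1..4}" "triple_binding F col i j (fst (slot F v s'))" "\<not> snd (slot F v s')"
  shows "next_binding col i j (fst (slot F v s)) = fst (slot F v s')"
proof -
  have "slot F v s = (fst (slot F v s), True)"
    using s(3) by (metis prod.collapse)
  then have "end_slot (fst (slot F v s)) True = (v, s)"
    by (rule end_slot_eqI[OF v s(1)])
  moreover have "triple_slot col i j v False = s'"
    by (rule triple_slot_eqI[OF col v \<open>i \<noteq> j\<close> s'(1,2)]) (use s'(3) in simp)
  ultimately show ?thesis
    unfolding next_binding_def using slot_binding(2)[OF v s(1)] by simp
qed

lemma next_binding_at_head:
  assumes col: "coloring N F col" and "i \<noteq> j" and b: "b \<in> bindings F" "\<not> circ F b"
    and tb: "triple_binding F col i j b"
  defines "v \<equiv> fst (end_slot b True)"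
  shows "v \<in> verts F"
    and "slot F v (triple_slot col i j v True) = (b, True)"
    and "triple_slot col i j v False \<in> {1..4}"
    and "slot F v (triple_slot col i j v False) = (next_binding col i j b, False)"
    and "end_slot (next_binding col i j b) False = (v, triple_slot col i j v False)"
    and "next_binding col i j b \<in> bindings F" "\<not> circ F (next_binding col i j b)"
    and "triple_binding F col i j (next_binding col i j b)"
proof -
  have s: "snd (end_slot b True) \<in> {1..4}" and v: "v \<in> verts F"
    using end_slot(1)[OF b, of True] unfolding v_def by (auto simp: mem_Times_iff)
  have sl: "slot F v (snd (end_slot b True)) = (b, True)"
    using end_slot(2)[OF b] unfolding v_def .
  have tr: "triple_binding F col i j (fst (slot F v (snd (end_slot b True))))"
    using sl tb by simp
  note ts = triple_slot[OF col v \<open>i \<noteq> j\<close> s tr]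
  show "v \<in> verts F" by (rule v)
  have "triple_slot col i j v True = snd (end_slot b True)"
    by (rule triple_slot_eqI[OF col v \<open>i \<noteq> j\<close> s tr]) (simp add: sl)
  with sl show "slot F v (triple_slot col i j v True) = (b, True)" by simp
  have nb: "next_binding col i j b = fst (slot F v (triple_slot col i j v False))"
    unfolding next_binding_def v_def using b(2) by (simp add: Let_def)
  show "triple_slot col i j v False \<in> {1..4}" by (rule ts(1))
  show sl': "slot F v (triple_slot col i j v False) = (next_binding col i j b, False)"
    unfolding nb using ts(3)[of False] by (metis prod.collapse)
  show "end_slot (next_binding col i j b) False = (v, triple_slot col i j v False)"
    by (rule end_slot_eqI[OF v ts(1) sl'])
  show "next_binding col i j b \<in> bindings F" "\<not> circ F (next_binding col i j b)"
    unfolding nb using slot_binding[OF v ts(1)] by blast+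
  show "triple_binding F col i j (next_binding col i j b)"
    unfolding nb by (rule ts(2))
qed

lemma positive_next_binding_iff:
  assumes col: "coloring N F col" and "i \<noteq> j" and b: "b \<in> bindings F"
    and tb: "triple_binding F col i j b"
  shows "positive_binding F col i j (next_binding col i j b) \<longleftrightarrow> positive_binding F col i j b"
proof (cases "circ F b")
  case False
  define v where "v = fst (end_slot b True)"
  note nb = next_binding_at_head[OF col \<open>i \<noteq> j\<close> b False tb, folded v_def]
  have s: "snd (end_slot b True) \<in> {1..4}" and sl: "slot F v (snd (end_slot b True)) = (b, True)"
    using end_slot[OF b False, of True] unfolding v_def by (auto simp: mem_Times_iff)
  show ?thesis
    using positive_slots_iff[OF col nb(1) \<open>i \<noteq> j\<close> nb(3) _ s] nb(4,8) sl tb by simp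
qed (simp add: next_binding_def)

lemma next_binding_inj:
  assumes col: "coloring N F col" and "i \<noteq> j"
    and b: "b \<in> bindings F" "triple_binding F col i j b"
    and b': "b' \<in> bindings F" "triple_binding F col i j b'"
    and eq: "next_binding col i j b = next_binding col i j b'"
  shows "b = b'"
proof (cases "circ F b"; cases "circ F b'")
  assume nc: "\<not> circ F b" "\<not> circ F b'"
  define v v' where "v = fst (end_slot b True)" and "v' = fst (end_slot b' True)"
  note nb = next_binding_at_head[OF col \<open>i \<noteq> j\<close> b(1) nc(1) b(2), folded v_def]
    and nb' = next_binding_at_head[OF col \<open>i \<noteq> j\<close> b'(1) nc(2) b'(2), folded v'_def]
  have "v = v'"
    using nb(5) nb'(5) eq by simp
  then show "b = b'"
    using nb(2) nb'(2) by simp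
next
  assume "circ F b" "\<not> circ F b'"
  then show "b = b'"
    using eq next_binding_at_head(7)[OF col \<open>i \<noteq> j\<close> b'(1) _ b'(2)] by (simp add: next_binding_def)
next
  assume "\<not> circ F b" "circ F b'"
  then show "b = b'"
    using eq next_binding_at_head(7)[OF col \<open>i \<noteq> j\<close> b(1) _ b(2)] by (simp add: next_binding_def)
qed (use eq in \<open>simp add: next_binding_def\<close>)

lemma triple_adj_cases:
  assumes col: "coloring N F col" and "i \<noteq> j" and yz: "(y, z) \<in> triple_adj F col i j"
  shows "z = y \<or> z = next_binding col i j y \<or> y = next_binding col i j z"
    and "positive_binding F col i j y \<longleftrightarrow> positive_binding F col i j z"
proof -
  obtain v where v: "v \<in> verts F" "touches F v y" "touches F v z"
    and t: "triple_binding F col i j y" "triple_binding F col i j z"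
    using yz unfolding triple_adj_def by blast
  obtain s s' where s: "s \<in> {1..4}" "fst (slot F v s) = y"
    and s': "s' \<in> {1..4}" "fst (slot F v s') = z"
    using v(2,3) unfolding touches_def by blast
  note next_slot = next_binding_slot[OF col v(1) \<open>i \<noteq> j\<close>]
  show "z = y \<or> z = next_binding col i j y \<or> y = next_binding col i j z"
  proof (cases "snd (slot F v s) = snd (slot F v s')")
    case True
    have "s = triple_slot col i j v (snd (slot F v s))"
      by (rule triple_slot_eqI[OF col v(1) \<open>i \<noteq> j\<close> s(1) t(1)[folded s(2)] refl, symmetric])
    also have "\<dots> = triple_slot col i j v (snd (slot F v s'))"
      using True by (rule arg_cong)
    also have "\<dots> = s'"
      by (rule triple_slot_eqI[OF col v(1) \<open>i \<noteq> j\<close> s'(1) t(2)[folded s'(2)] refl])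
    finally have "s = s'" .
    then show ?thesis using s(2) s'(2) by blast
  next
    case False
    show ?thesis
    proof (cases "snd (slot F v s)")
      case True
      with False have "next_binding col i j y = z"
        using next_slot[OF s(1) _ _ s'(1)] s(2) s'(2) t by simp
      then show ?thesis by simp
    next
      case head': False
      with False have "next_binding col i j z = y"
        using next_slot[OF s'(1) _ _ s(1)] s(2) s'(2) t by simp
      then show ?thesis by simp
    qed
  qed
  show "positive_binding F col i j y \<longleftrightarrow> positive_binding F col i j z"
    using positive_slots_iff[OF col v(1) \<open>i \<noteq> j\<close> s(1) _ s'(1)] s(2) s'(2) t by simp
qed

lemma next_binding_triple_adj:
  assumes col: "coloring N F col" and "i \<noteq> j" and b: "b \<in> bindings F" "\<not> circ F b"
    and tb: "triple_binding F col i j b"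
  shows "(b, next_binding col i j b) \<in> triple_adj F col i j"
proof -
  note nb = next_binding_at_head[OF col \<open>i \<noteq> j\<close> b tb]
  have "touches F (fst (end_slot b True)) b"
    using end_slot[OF b, of True] unfolding touches_def by (force simp: mem_Times_iff)
  moreover have "touches F (fst (end_slot b True)) (next_binding col i j b)"
    using nb(3,4) unfolding touches_def by (metis fst_conv)
  ultimately show ?thesis
    using nb(1,8) tb unfolding triple_adj_def by blast
qed

lemma triple_adj_sym: "(y, z) \<in> triple_adj F col i j \<Longrightarrow> (z, y) \<in> triple_adj F col i j"
  unfolding triple_adj_def by blast

definition pos_bindings :: "('f \<Rightarrow> nat set) \<Rightarrow> nat \<Rightarrow> nat \<Rightarrow> 'b set" where
  "pos_bindings col i j = {b \<in> bindings F. positive_binding F col i j b}"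

definition pos_next :: "('f \<Rightarrow> nat set) \<Rightarrow> nat \<Rightarrow> nat \<Rightarrow> 'b \<Rightarrow> 'b" where
  "pos_next col i j b = (if b \<in> pos_bindings col i j then next_binding col i j b else b)"

lemma finite_pos_bindings: "finite (pos_bindings col i j)"
  unfolding pos_bindings_def using finite_bindings by simp

lemma pos_bindings_triple:
  "coloring N F col \<Longrightarrow> i \<noteq> j \<Longrightarrow> b \<in> pos_bindings col i j \<Longrightarrow> triple_binding F col i j b"
  unfolding pos_bindings_def using positive_imp_triple by blast

lemma pos_next_permutes:
  assumes col: "coloring N F col" and "i \<noteq> j"
  shows "pos_next col i j permutes pos_bindings col i j"
proof (rule inj_imp_permutes)
  show "inj_on (pos_next col i j) (pos_bindings col i j)"
    using next_binding_inj[OF col \<open>i \<noteq> j\<close>] pos_bindings_triple[OF col \<open>i \<noteq> j\<close>]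
    unfolding pos_next_def inj_on_def by (auto simp: pos_bindings_def)
  show "pos_next col i j b \<in> pos_bindings col i j" if "b \<in> pos_bindings col i j" for b
  proof (cases "circ F b")
    case False
    with that show ?thesis
      using next_binding_at_head(6)[OF col \<open>i \<noteq> j\<close> _ False] positive_next_binding_iff[OF col \<open>i \<noteq> j\<close>]
        pos_bindings_triple[OF col \<open>i \<noteq> j\<close> that]
      unfolding pos_next_def by (auto simp: pos_bindings_def)
  qed (use that in \<open>simp add: pos_next_def next_binding_def\<close>)
qed (simp_all add: finite_pos_bindings pos_next_def)

lemma triple_adj_rtrancl_pos:
  assumes col: "coloring N F col" and "i \<noteq> j" and b: "b \<in> pos_bindings col i j"
    and path: "(b, y) \<in> (triple_adj F col i j)\<^sup>*"
  shows "y \<in> pos_bindings col i j" and "(b, y) \<in> cycle_rel (pos_bindings col i j) (pos_next col i j)"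
proof -
  from path have "y \<in> pos_bindings col i j \<and> (b, y) \<in> cycle_rel (pos_bindings col i j) (pos_next col i j)"
  proof (induction rule: rtrancl_induct)
    case (step y z)
    note adj = triple_adj_cases[OF col \<open>i \<noteq> j\<close> step.hyps(2)]
    have y: "y \<in> pos_bindings col i j" using step.IH by blast
    then have z: "z \<in> pos_bindings col i j"
      using adj(2) step.hyps(2) unfolding pos_bindings_def triple_adj_def triple_binding_def by auto
    have "z = y \<or> z = pos_next col i j y \<or> y = pos_next col i j z"
      using adj(1) y z by (auto simp: pos_next_def)
    then have "(y, z) \<in> cycle_rel (pos_bindings col i j) (pos_next col i j)"
      using cycle_rel_step[OF y, of "pos_next col i j"] cycle_rel_step[OF z, of "pos_next col i j"]
      by (auto intro: cycle_rel_sym)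
    with step.IH z show ?case by (blast intro: cycle_rel_trans)
  qed (use b in simp)
  then show "y \<in> pos_bindings col i j" "(b, y) \<in> cycle_rel (pos_bindings col i j) (pos_next col i j)"
    by blast+
qed

lemma triple_adj_class:
  assumes col: "coloring N F col" and "i \<noteq> j" and b: "b \<in> pos_bindings col i j"
  shows "(triple_adj F col i j)\<^sup>* `` {b} = cycle_rel (pos_bindings col i j) (pos_next col i j) `` {b}"
proof -
  have "(x, pos_next col i j x) \<in> triple_adj F col i j \<or> pos_next col i j x = x"
    if "x \<in> pos_bindings col i j" for x
    using next_binding_triple_adj[OF col \<open>i \<noteq> j\<close> _ _ pos_bindings_triple[OF col \<open>i \<noteq> j\<close> that]]
      that by (auto simp: pos_next_def next_binding_def pos_bindings_def)
  then have "cycle_rel (pos_bindings col i j) (pos_next col i j) \<subseteq> (triple_adj F col i j)\<^sup>*"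
    by (intro cycle_rel_subset_rtrancl)
      (metis r_into_rtrancl rtrancl.rtrancl_refl, metis r_into_rtrancl rtrancl.rtrancl_refl triple_adj_sym)
  then show ?thesis
    using triple_adj_rtrancl_pos(2)[OF col \<open>i \<noteq> j\<close> b] by blast
qed

lemma theta_plus_num_cycles:
  assumes col: "coloring N F col" and "i \<noteq> j"
  shows "theta_plus F col i j = num_cycles (pos_bindings col i j) (pos_next col i j)"
proof -
  let ?R = "(triple_adj F col i j)\<^sup>*"
  have "{C \<in> triple_circles F col i j. \<forall>b\<in>C. positive_binding F col i j b}
      = (\<lambda>b. ?R `` {b}) ` pos_bindings col i j"
  proof (intro equalityI subsetI)
    fix C assume "C \<in> {C \<in> triple_circles F col i j. \<forall>b\<in>C. positive_binding F col i j b}"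
    then obtain b where b: "triple_binding F col i j b" "C = ?R `` {b}"
      and pos: "\<forall>b\<in>C. positive_binding F col i j b"
      unfolding triple_circles_def by blast
    then have "b \<in> pos_bindings col i j"
      unfolding pos_bindings_def triple_binding_def by blast
    with b(2) show "C \<in> (\<lambda>b. ?R `` {b}) ` pos_bindings col i j" by blast
  next
    fix C assume "C \<in> (\<lambda>b. ?R `` {b}) ` pos_bindings col i j"
    then obtain b where b: "b \<in> pos_bindings col i j" "C = ?R `` {b}" by blast
    then have "C \<in> triple_circles F col i j"
      unfolding triple_circles_def using pos_bindings_triple[OF col \<open>i \<noteq> j\<close>] by blast
    moreover have "\<forall>y\<in>C. positive_binding F col i j y"
      using triple_adj_rtrancl_pos(1)[OF col \<open>i \<noteq> j\<close> b(1)] b(2) unfolding pos_bindings_def by blast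
    ultimately show "C \<in> {C \<in> triple_circles F col i j. \<forall>b\<in>C. positive_binding F col i j b}" by blast
  qed
  also have "\<dots> = (\<lambda>b. cycle_rel (pos_bindings col i j) (pos_next col i j) `` {b}) ` pos_bindings col i j"
    using triple_adj_class[OF col \<open>i \<noteq> j\<close>] by simp
  finally show ?thesis
    unfolding theta_plus_def num_cycles_def by simp
qed

text \<open>A binding can be positive both w.r.t. \<open>(1, k)\<close> and w.r.t. \<open>(2, k)\<close>, so the two sets are
  kept apart as the layers 1 and 2.\<close>

definition layered :: "('f \<Rightarrow> nat set) \<Rightarrow> nat \<Rightarrow> ('b \<times> nat) set" where
  "layered col k = (\<lambda>b. (b, 1)) ` pos_bindings col 1 k \<union> (\<lambda>b. (b, 2)) ` pos_bindings col 2 k"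

definition layered_next :: "('f \<Rightarrow> nat set) \<Rightarrow> nat \<Rightarrow> 'b \<times> nat \<Rightarrow> 'b \<times> nat" where
  "layered_next col k x =
     (if snd x \<in> {1, 2} then (pos_next col (snd x) k (fst x), snd x) else x)"

lemma mem_layered: "(b, j) \<in> layered col k \<longleftrightarrow> j \<in> {1, 2} \<and> b \<in> pos_bindings col j k"
  unfolding layered_def by auto

lemma finite_layered: "finite (layered col k)"
  unfolding layered_def using finite_pos_bindings by simp

lemma layered_next_permutes:
  assumes col: "coloring N F col" and k: "k \<notin> {1, 2}"
  shows "layered_next col k permutes layered col k"
proof -
  have perm: "pos_next col j k permutes pos_bindings col j k" if "j \<in> {1, 2}" for j
    using pos_next_permutes[OF col] k that by auto
  show ?thesis
  proof (rule inj_imp_permutes)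
    show "inj_on (layered_next col k) (layered col k)"
    proof (rule inj_onI)
      fix x y assume xy: "x \<in> layered col k" "y \<in> layered col k"
        "layered_next col k x = layered_next col k y"
      obtain b j b' j' where x: "x = (b, j)" and y: "y = (b', j')" by fastforce
      have "j = j'" "j \<in> {1, 2}" "pos_next col j k b = pos_next col j k b'"
        using xy unfolding x y by (auto simp: layered_next_def mem_layered)
      then show "x = y"
        unfolding x y using injD[OF permutes_inj[OF perm]] by blast
    qed
    show "layered_next col k x \<in> layered col k" if "x \<in> layered col k" for x
      using that permutes_in_image[OF perm] by (cases x) (auto simp: layered_next_def mem_layered)
    show "layered_next col k x = x" if "x \<notin> layered col k" for x
      using that permutes_not_in[OF perm] by (cases x) (auto simp: layered_next_def mem_layered)
  qed (rule finite_layered)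
qed

lemma num_cycles_layered:
  assumes col: "coloring N F col" and k: "k \<notin> {1, 2}"
  shows "num_cycles (layered col k) (layered_next col k) = theta_plus F col 1 k + theta_plus F col 2 k"
proof -
  have perm: "pos_next col j k permutes pos_bindings col j k" if "j \<in> {1, 2}" for j
    using pos_next_permutes[OF col] k that by auto
  have layer: "num_cycles ((\<lambda>b. (b, j)) ` pos_bindings col j k) (layered_next col k) = theta_plus F col j k"
    if "j \<in> {1, 2}" for j
  proof -
    have "num_cycles ((\<lambda>b. (b, j)) ` pos_bindings col j k) (layered_next col k)
        = num_cycles (pos_bindings col j k) (pos_next col j k)"
      by (rule num_cycles_image) (use that in \<open>auto simp: inj_def layered_next_def\<close>)
    also have "\<dots> = theta_plus F col j k"
      using theta_plus_num_cycles[OF col, of j k] that k by auto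
    finally show ?thesis .
  qed
  have closed: "layered_next col k ` (\<lambda>b. (b, j)) ` pos_bindings col j k \<subseteq> (\<lambda>b. (b, j)) ` pos_bindings col j k"
    if "j \<in> {1, 2}" for j
    using that permutes_in_image[OF perm[OF that]] by (auto simp: layered_next_def)
  have "(\<lambda>b. (b, 1::nat)) ` pos_bindings col 1 k \<inter> (\<lambda>b. (b, 2)) ` pos_bindings col 2 k = {}"
    by auto
  from num_cycles_Un[OF finite_imageI[OF finite_pos_bindings] finite_imageI[OF finite_pos_bindings]
      this closed closed]
  show ?thesis
    unfolding layered_def using layer by simp
qed

end

section \<open>The Kempe move\<close>

locale kempe_setting = closed_foam F N for F :: "('f, 'b, 'v) foam" and N +
  fixes c :: "'f \<Rightarrow> nat set" and S :: "'f set" and k :: nat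
  assumes coloring: "coloring N F c"
    and closed_S: "closed_subsurface F c 1 2 S"
    and k: "3 \<le> k" "k \<le> N"
begin

text \<open>A definition rather than an abbreviation: the simplifier rewrites the numeral \<open>1::nat\<close> to
  \<open>Suc 0\<close>, after which rules about \<open>kempe_move c 1 2 S\<close> would no longer match.\<close>

definition c' :: "'f \<Rightarrow> nat set" where
  "c' = kempe_move c 1 2 S"

definition moved :: "'b set" where
  "moved = {b \<in> bindings F. \<exists>f\<in>sheets F b. f \<in> S}"

definition moved_vertex :: "'v \<Rightarrow> bool" where
  "moved_vertex v \<longleftrightarrow> (\<exists>i\<in>{1..4}. fst (slot F v i) \<in> moved)"

definition neutral :: "'b \<Rightarrow> bool" where
  "neutral b \<longleftrightarrow> (\<forall>f\<in>sheets F b. 1 \<in> c f \<longleftrightarrow> 2 \<in> c f)"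

lemma k_not_12: "k \<notin> {1, 2}"
  using k by auto

lemma S_in_F12: "f \<in> S \<Longrightarrow> f \<in> facets F \<and> (1 \<in> c f) \<noteq> (2 \<in> c f)"
  using closed_S unfolding closed_subsurface_def in_Fij_def by blast

lemma S_closed:
  "b \<in> bindings F \<Longrightarrow> f \<in> sheets F b \<Longrightarrow> f \<in> S \<Longrightarrow> g \<in> sheets F b \<Longrightarrow> (1 \<in> c g) \<noteq> (2 \<in> c g) \<Longrightarrow>
    g \<in> S"
  using closed_S unfolding closed_subsurface_def in_Fij_def by blast

lemma finite_moved: "finite moved"
  unfolding moved_def using finite_bindings by simp

lemma kempe_move_flip12: "c' f = flip12 (f \<in> S) ` c f"
  unfolding c'_def kempe_move_def swap_pigments_12 flip12_def by simp

lemma kempe_move_binding: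
  assumes b: "b \<in> bindings F" and f: "f \<in> sheets F b"
  shows "c' f = flip12 (b \<in> moved) ` c f"
proof (cases "f \<in> S")
  case True
  then have "b \<in> moved"
    using b f unfolding moved_def by blast
  with True show ?thesis
    unfolding kempe_move_flip12 by simp
next
  case False
  then have "b \<notin> moved \<or> (1 \<in> c f \<longleftrightarrow> 2 \<in> c f)"
    using S_closed[OF b _ _ f] unfolding moved_def by blast
  then show ?thesis
    using False flip12_image_neutral unfolding kempe_move_flip12 by auto
qed

lemma coloring_kempe_move: "coloring N F c'"
  unfolding coloring_def
proof (intro conjI ballI)
  fix f assume f: "f \<in> facets F"
  have cf: "c f \<subseteq> {1..N}" "card (c f) = lab F f"
    using coloring f unfolding coloring_def by blast+
  have "flip12 (f \<in> S) ` c f \<subseteq> flip12 (f \<in> S) ` {1..N}"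
    using cf(1) by (rule image_mono)
  also have "\<dots> \<subseteq> {1..N}"
    using k by (auto simp: flip12_def transpose_def)
  finally show "c' f \<subseteq> {1..N}"
    unfolding kempe_move_flip12 .
  have "inj (flip12 (f \<in> S))"
    by (simp add: flip12_def inj_transpose)
  then show "card (c' f) = lab F f"
    unfolding kempe_move_flip12 using cf(2) by (simp add: card_image inj_on_subset)
next
  fix b assume b: "b \<in> bindings F"
  have "sm1 F b \<in> sheets F b" "sm2 F b \<in> sheets F b" "big F b \<in> sheets F b"
    unfolding sheets_def by auto
  then show "c' (sm1 F b) \<union> c' (sm2 F b) = c' (big F b)"
    using kempe_move_binding[OF b] coloring_big[OF coloring b] by (simp add: image_Un)
qed

text \<open>The facets of \<open>F\<^sub>1\<^sub>2\<close> around a singular point are linked through its four bindings, so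
  \<open>S\<close> contains all of them as soon as it contains one.\<close>

lemma moved_vertex_facets:
  assumes v: "v \<in> verts F" and "moved_vertex v" and i: "i \<in> {1..4}"
    and f: "f \<in> sheets F (fst (slot F v i))"
  shows "f \<in> S \<or> (1 \<in> c f \<longleftrightarrow> 2 \<in> c f)"
proof -
  obtain fa fb fc fab fbc fabc where model:
    "sm1 F (fst (slot F v 1)) = fa" "sm2 F (fst (slot F v 1)) = fb" "big F (fst (slot F v 1)) = fab"
    "sm1 F (fst (slot F v 2)) = fab" "sm2 F (fst (slot F v 2)) = fc" "big F (fst (slot F v 2)) = fabc"
    "sm1 F (fst (slot F v 3)) = fb" "sm2 F (fst (slot F v 3)) = fc" "big F (fst (slot F v 3)) = fbc"
    "sm1 F (fst (slot F v 4)) = fa" "sm2 F (fst (slot F v 4)) = fbc" "big F (fst (slot F v 4)) = fabc"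
    and colors: "c fab = c fa \<union> c fb" "c fbc = c fb \<union> c fc" "c fabc = c fa \<union> c fb \<union> c fc"
    and disjoint: "c fa \<inter> c fb = {}" "c fa \<inter> c fc = {}" "c fb \<inter> c fc = {}"
    using vertex_model[OF coloring v] by metis
  let ?facets = "{fa, fb, fc, fab, fbc, fabc}"
  let ?F12 = "\<lambda>x. (1 \<in> c x) \<noteq> (2 \<in> c x)"
  have sheets: "sheets F (fst (slot F v 1)) = {fa, fb, fab}" "sheets F (fst (slot F v 2)) = {fab, fc, fabc}"
    "sheets F (fst (slot F v 3)) = {fb, fc, fbc}" "sheets F (fst (slot F v 4)) = {fa, fbc, fabc}"
    unfolding sheets_def model by auto
  have closure: "(\<exists>x\<in>sheets F b. x \<in> S) \<longrightarrow> (\<forall>y\<in>sheets F b. ?F12 y \<longrightarrow> y \<in> S)"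
    if "b \<in> bindings F" for b
    using S_closed[OF that] by blast
  have bs: "fst (slot F v 1) \<in> bindings F" "fst (slot F v 2) \<in> bindings F"
    "fst (slot F v 3) \<in> bindings F" "fst (slot F v 4) \<in> bindings F"
    using slot_binding(1)[OF v] by simp_all
  note closures = closure[OF bs(1), unfolded sheets] closure[OF bs(2), unfolded sheets]
    closure[OF bs(3), unfolded sheets] closure[OF bs(4), unfolded sheets]
  have slot_facets: "sheets F (fst (slot F v s)) \<subseteq> ?facets" if "s \<in> {1..4}" for s
    using that sheets unfolding one_to_four by blast
  have some_in_S: "\<exists>x\<in>?facets. x \<in> S"
    using \<open>moved_vertex v\<close> slot_facets unfolding moved_vertex_def moved_def by blast
  have S_F12: "\<forall>x\<in>?facets. x \<in> S \<longrightarrow> ?F12 x"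
    using S_in_F12 by blast
  have colors': "q \<in> c fab \<longleftrightarrow> q \<in> c fa \<or> q \<in> c fb" "q \<in> c fbc \<longleftrightarrow> q \<in> c fb \<or> q \<in> c fc"
    "q \<in> c fabc \<longleftrightarrow> q \<in> c fa \<or> q \<in> c fb \<or> q \<in> c fc"
    "\<not> (q \<in> c fa \<and> q \<in> c fb)" "\<not> (q \<in> c fa \<and> q \<in> c fc)" "\<not> (q \<in> c fb \<and> q \<in> c fc)" for q
    using colors disjoint by blast+
  have "\<forall>y\<in>?facets. ?F12 y \<longrightarrow> y \<in> S"
    using some_in_S S_F12 colors'[of 1] colors'[of 2] closures unfolding ball_simps bex_simps
    by argo
  moreover have "f \<in> ?facets"
    using f slot_facets[OF i] by blast
  ultimately show ?thesis by blast
qed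

lemma kempe_move_vertex:
  assumes v: "v \<in> verts F" and i: "i \<in> {1..4}" and f: "f \<in> sheets F (fst (slot F v i))"
  shows "c' f = flip12 (moved_vertex v) ` c f"
proof (cases "moved_vertex v")
  case True
  then consider "f \<in> S" | "f \<notin> S" "1 \<in> c f \<longleftrightarrow> 2 \<in> c f"
    using moved_vertex_facets[OF v _ i f] S_in_F12 by blast
  then show ?thesis
  proof cases
    case 1
    with True show ?thesis
      unfolding kempe_move_flip12 by simp
  next
    case 2
    then show ?thesis
      using flip12_image_neutral[of "c f"] unfolding kempe_move_flip12 by simp
  qed
next
  case False
  then have "fst (slot F v i) \<notin> moved"
    using i unfolding moved_vertex_def by blast
  with False show ?thesis
    using kempe_move_binding[OF slot_binding(1)[OF v i] f] by simp
qed

lemma moved_iff_moved_vertex: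
  assumes v: "v \<in> verts F" and i: "i \<in> {1..4}" and "\<not> neutral (fst (slot F v i))"
  shows "fst (slot F v i) \<in> moved \<longleftrightarrow> moved_vertex v"
proof -
  obtain f where f: "f \<in> sheets F (fst (slot F v i))" "(1 \<in> c f) \<noteq> (2 \<in> c f)"
    using \<open>\<not> neutral (fst (slot F v i))\<close> unfolding neutral_def by blast
  have "flip12 (fst (slot F v i) \<in> moved) ` c f = flip12 (moved_vertex v) ` c f"
    using kempe_move_binding[OF slot_binding(1)[OF v i] f(1)] kempe_move_vertex[OF v i f(1)] by simp
  then show ?thesis
    by (simp only: flip12_image_eq_iff[OF f(2)])
qed

lemma neutral_not_moved: "neutral b \<Longrightarrow> b \<notin> moved"
  using S_in_F12 unfolding moved_def neutral_def by blast

lemma neutral_pos_bindings: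
  assumes "neutral b" "j \<in> {1, 2}"
  shows "b \<in> pos_bindings c j k \<longleftrightarrow> b \<in> pos_bindings c 1 k"
proof -
  have "1 \<in> c f \<longleftrightarrow> 2 \<in> c f" if "f \<in> {sm1 F b, sm2 F b}" for f
    using assms(1) that unfolding neutral_def sheets_def by blast
  then show ?thesis
    using assms(2) positive_binding_iff[OF coloring] unfolding pos_bindings_def by auto
qed

lemma positive_kempe_iff:
  assumes "b \<in> bindings F"
  shows "positive_binding F c' j k b \<longleftrightarrow> positive_binding F c (flip12 (b \<in> moved) j) k b"
  by (rule flip12_binding_iff(2)[OF kempe_move_binding[OF assms] k_not_12])

lemma triple_slot_kempe_iff:
  assumes "v \<in> verts F" "i \<in> {1..4}"
  shows "triple_binding F c' j k (fst (slot F v i)) \<longleftrightarrow>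
    triple_binding F c (flip12 (moved_vertex v) j) k (fst (slot F v i))"
  by (rule flip12_binding_iff(1)[OF kempe_move_vertex[OF assms] k_not_12])

lemma next_binding_kempe:
  assumes "b \<in> bindings F"
  shows "next_binding c' j k b = next_binding c (flip12 (moved_vertex (fst (end_slot b True))) j) k b"
proof (cases "circ F b")
  case False
  define v where "v = fst (end_slot b True)"
  have "v \<in> verts F"
    using end_slot(1)[OF assms False, of True] unfolding v_def by (auto simp: mem_Times_iff)
  then have "triple_slot c' j k v e = triple_slot c (flip12 (moved_vertex v) j) k v e" for e
    unfolding triple_slot_def
    by (intro arg_cong[where f = The] ext) (use triple_slot_kempe_iff in blast)
  then show ?thesis
    unfolding next_binding_def v_def[symmetric] by (simp add: Let_def)
qed (simp add: next_binding_def)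

lemma mem_layered_kempe: "x \<in> layered c' k \<longleftrightarrow> swap_layers moved x \<in> layered c k"
proof -
  obtain b j where x: "x = (b, j)" by fastforce
  show ?thesis
    unfolding x swap_layers_apply mem_layered pos_bindings_def flip12_in_12 mem_Collect_eq
    by (cases "b \<in> bindings F") (simp_all add: positive_kempe_iff)
qed

definition neutral_ends :: "bool \<Rightarrow> 'b set" where
  "neutral_ends e =
     {b \<in> pos_bindings c 1 k. neutral b \<and> \<not> circ F b \<and> moved_vertex (fst (end_slot b e))}"

lemma finite_neutral_ends: "finite (neutral_ends e)"
  unfolding neutral_ends_def using finite_pos_bindings by simp

lemma moved_vertex_end:
  assumes b: "b \<in> bindings F" "\<not> circ F b" and "\<not> neutral b"
  shows "moved_vertex (fst (end_slot b e)) \<longleftrightarrow> b \<in> moved"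
proof -
  obtain v s where vs: "end_slot b e = (v, s)" by fastforce
  then have "v \<in> verts F" "s \<in> {1..4}" "fst (slot F v s) = b"
    using end_slot[OF b, of e] by auto
  then show ?thesis
    using moved_iff_moved_vertex \<open>\<not> neutral b\<close> vs by auto
qed

lemma neutral_end_iff:
  assumes j: "j \<in> {1, 2}" and b: "b \<in> pos_bindings c j k" "\<not> circ F b"
  shows "moved_vertex (fst (end_slot b e)) \<noteq> (b \<in> moved) \<longleftrightarrow> b \<in> neutral_ends e"
proof (cases "neutral b")
  case True
  then show ?thesis
    using neutral_not_moved neutral_pos_bindings[OF True j] b unfolding neutral_ends_def by auto
next
  case False
  have "b \<in> bindings F" using b(1) unfolding pos_bindings_def by blast
  with False show ?thesis
    using moved_vertex_end b(2) unfolding neutral_ends_def by auto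
qed

lemma layered_next_outside:
  "x \<notin> layered col k \<Longrightarrow> coloring N F col \<Longrightarrow> layered_next col k x = x"
  using permutes_not_in[OF layered_next_permutes[OF _ k_not_12]] by blast

lemma swap_neutral_ends_outside:
  assumes "x \<notin> layered c k"
  shows "swap_layers (neutral_ends e) x = x"
proof -
  obtain b j where x: "x = (b, j)" by fastforce
  have "j \<notin> {1, 2}" if "b \<in> neutral_ends e"
    using that assms neutral_pos_bindings[of b] unfolding x mem_layered neutral_ends_def by auto
  then show ?thesis
    unfolding x using flip12_other by (cases "b \<in> neutral_ends e") auto
qed

lemma layered_next_kempe_moved:
  assumes "(b, j) \<in> layered c k"
  shows "layered_next c' k (swap_layers moved (b, j)) =
    (next_binding c (flip12 (moved_vertex (fst (end_slot b True)) \<noteq> (b \<in> moved)) j) k b,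
     flip12 (b \<in> moved) j)"
proof -
  have j: "j \<in> {1, 2}" and b: "b \<in> pos_bindings c j k"
    using assms unfolding mem_layered by blast+
  then have bB: "b \<in> bindings F" unfolding pos_bindings_def by blast
  define m where "m = (b \<in> moved)"
  have m: "flip12 m j \<in> {1, 2}" using j by (simp only: flip12_in_12)
  have "positive_binding F c' (flip12 m j) k b"
    using b positive_kempe_iff[OF bB] unfolding m_def pos_bindings_def by (simp add: flip12_flip12)
  then have "layered_next c' k (b, flip12 m j) = (next_binding c' (flip12 m j) k b, flip12 m j)"
    using m bB unfolding layered_next_def pos_next_def pos_bindings_def by simp
  then show ?thesis
    unfolding m_def by (simp add: next_binding_kempe[OF bB] flip12_flip12)
qed

lemma layered_next_neutral_heads:
  assumes "(b, j) \<in> layered c k"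
  defines "j' \<equiv> flip12 (b \<in> neutral_ends True) j"
  shows "j' \<in> {1, 2}" and "b \<in> pos_bindings c j' k"
    and "layered_next c k (swap_layers (neutral_ends True) (b, j)) = (next_binding c j' k b, j')"
proof -
  have j: "j \<in> {1, 2}" and b: "b \<in> pos_bindings c j k"
    using assms unfolding mem_layered by blast+
  show j': "j' \<in> {1, 2}" unfolding j'_def using j by (simp only: flip12_in_12)
  show b': "b \<in> pos_bindings c j' k"
    using b neutral_pos_bindings[OF _ j] neutral_pos_bindings[OF _ j'] unfolding j'_def
    by (cases "b \<in> neutral_ends True") (auto simp: neutral_ends_def)
  have "layered_next c k (b, j') = (next_binding c j' k b, j')"
    using j' b' unfolding layered_next_def pos_next_def by simp
  then show "layered_next c k (swap_layers (neutral_ends True) (b, j)) = (next_binding c j' k b, j')"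
    unfolding j'_def by simp
qed

lemma layered_next_kempe_conj:
  "swap_layers moved \<circ> layered_next c' k \<circ> swap_layers moved =
     swap_layers (neutral_ends False) \<circ> layered_next c k \<circ> swap_layers (neutral_ends True)"
proof (rule ext)
  fix x :: "'b \<times> nat"
  obtain b j where x: "x = (b, j)" by fastforce
  show "(swap_layers moved \<circ> layered_next c' k \<circ> swap_layers moved) x =
      (swap_layers (neutral_ends False) \<circ> layered_next c k \<circ> swap_layers (neutral_ends True)) x"
  proof (cases "x \<in> layered c k")
    case False
    then have "swap_layers moved x \<notin> layered c' k"
      using mem_layered_kempe by simp
    then show ?thesis
      using False layered_next_outside[OF _ coloring] layered_next_outside[OF _ coloring_kempe_move]
        swap_neutral_ends_outside by simp
  next
    case True
    then have j: "j \<in> {1, 2}" and b: "b \<in> pos_bindings c j k"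
      unfolding x mem_layered by blast+
    define hv m j' where "hv = moved_vertex (fst (end_slot b True))" and "m = (b \<in> moved)"
      and "j' = flip12 (b \<in> neutral_ends True) j"
    note heads = layered_next_neutral_heads[OF True[unfolded x], folded j'_def]
    have lhs: "(swap_layers moved \<circ> layered_next c' k \<circ> swap_layers moved) x
        = swap_layers moved (next_binding c (flip12 (hv \<noteq> m) j) k b, flip12 m j)"
      using layered_next_kempe_moved[OF True[unfolded x]] unfolding x hv_def m_def by simp
    have rhs: "(swap_layers (neutral_ends False) \<circ> layered_next c k \<circ> swap_layers (neutral_ends True)) x
        = swap_layers (neutral_ends False) (next_binding c j' k b, j')"
      using heads(3) unfolding x by simp
    show ?thesis
    proof (cases "circ F b")
      case True
      then have not_ends: "b \<notin> neutral_ends True" "b \<notin> neutral_ends False"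
        and fixed: "next_binding col i k b = b" for col i
        unfolding neutral_ends_def next_binding_def by simp_all
      then have "(swap_layers moved \<circ> layered_next c' k \<circ> swap_layers moved) x = (b, j)"
        unfolding lhs m_def by (simp only: swap_layers_apply flip12_flip12 simp_thms flip12_False)
      moreover have "(swap_layers (neutral_ends False) \<circ> layered_next c k \<circ> swap_layers (neutral_ends True)) x = (b, j)"
        unfolding rhs j'_def fixed
        by (simp only: swap_layers_apply not_ends[THEN Eq_FalseI] flip12_False)
      ultimately show ?thesis by simp
    next
      case False
      have heads_iff: "hv \<noteq> m \<longleftrightarrow> b \<in> neutral_ends True"
        using neutral_end_iff[OF j b False] unfolding hv_def m_def .
      define b' where "b' = next_binding c j' k b"
      have "j' \<noteq> k" using heads(1) k_not_12 by blast
      have bB: "b \<in> bindings F" and tb: "triple_binding F c j' k b"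
        using heads(2) pos_bindings_triple[OF coloring \<open>j' \<noteq> k\<close>] unfolding pos_bindings_def by auto
      note nb = next_binding_at_head[OF coloring \<open>j' \<noteq> k\<close> bB False tb, folded b'_def]
      have b': "b' \<in> pos_bindings c j' k" "\<not> circ F b'" "fst (end_slot b' False) = fst (end_slot b True)"
        using nb(5-7) positive_next_binding_iff[OF coloring \<open>j' \<noteq> k\<close> bB tb] heads(2)
        unfolding b'_def pos_bindings_def by simp_all
      have tails_iff: "hv \<noteq> (b' \<in> moved) \<longleftrightarrow> b' \<in> neutral_ends False"
        using neutral_end_iff[OF heads(1) b'(1,2), of False] b'(3) unfolding hv_def by simp
      have j'_eq: "flip12 (hv \<noteq> m) j = j'"
        using heads_iff unfolding j'_def by simp
      have "((b' \<in> moved) \<noteq> m) = ((b' \<in> neutral_ends False) \<noteq> (b \<in> neutral_ends True))"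
        using heads_iff tails_iff by blast
      then show ?thesis
        unfolding lhs rhs j'_eq b'_def[symmetric] by (simp add: j'_def m_def flip12_flip12)
    qed
  qed
qed

lemma even_positive_slots:
  assumes v: "v \<in> verts F"
  shows "even (card {s \<in> {1..4}. fst (slot F v s) \<in> pos_bindings c 1 k})"
proof (cases "\<exists>s\<in>{1..4}. fst (slot F v s) \<in> pos_bindings c 1 k")
  case True
  let ?t = "\<lambda>s. triple_binding F c 1 k (fst (slot F v s))"
  have "1 \<noteq> k" using k_not_12 by auto
  note pos_triple = pos_bindings_triple[OF coloring \<open>1 \<noteq> k\<close>]
  from True obtain s0 where s0: "s0 \<in> {1..4}" "fst (slot F v s0) \<in> pos_bindings c 1 k" by blast
  have "fst (slot F v s) \<in> pos_bindings c 1 k \<longleftrightarrow> ?t s" if "s \<in> {1..4}" for s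
    using positive_slots_iff[OF coloring v \<open>1 \<noteq> k\<close> that _ s0(1) pos_triple[OF s0(2)]]
      pos_triple s0(2) slot_binding(1)[OF v that] unfolding pos_bindings_def by blast
  then have "{s \<in> {1..4}. fst (slot F v s) \<in> pos_bindings c 1 k} = {s \<in> {1..4}. ?t s}"
    by blast
  also have "\<dots> = {if ?t 1 then 1 else 2, if ?t 3 then 3 else 4}"
    using vertex_triples(1)[OF coloring v \<open>1 \<noteq> k\<close>] s0 pos_triple[OF s0(2)]
    unfolding one_to_four by auto
  finally show ?thesis by simp
next
  case False
  then have "{s \<in> {1..4}. fst (slot F v s) \<in> pos_bindings c 1 k} = {}" by blast
  then show ?thesis by (simp only: card.empty even_zero)
qed

definition moved_pos_ends :: "('b \<times> bool) set" where
  "moved_pos_ends = {(b, e). b \<in> pos_bindings c 1 k \<and> \<not> circ F b \<and> moved_vertex (fst (end_slot b e))}"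

text \<open>Double counting through the slots: at every singular point the positive bindings occupy
  no slot or two slots.\<close>

lemma even_card_moved_pos_ends: "even (card moved_pos_ends)"
proof -
  define W where
    "W = Sigma {v \<in> verts F. moved_vertex v} (\<lambda>v. {s \<in> {1..4}. fst (slot F v s) \<in> pos_bindings c 1 k})"
  have "card W = (\<Sum>v\<in>{v \<in> verts F. moved_vertex v}. card {s \<in> {1..4}. fst (slot F v s) \<in> pos_bindings c 1 k})"
    unfolding W_def by (rule card_SigmaI) (use finite_verts in auto)
  moreover have "even (\<Sum>v\<in>{v \<in> verts F. moved_vertex v}.
      card {s \<in> {1..4}. fst (slot F v s) \<in> pos_bindings c 1 k})"
    by (rule dvd_sum) (use even_positive_slots in blast)
  ultimately have "even (card W)" by (simp only:)
  have "W \<subseteq> verts F \<times> {1..4}" unfolding W_def by auto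
  then have "inj_on (\<lambda>(v, s). slot F v s) W"
    using bij_betw_imp_inj_on[OF bij_slot] inj_on_subset by blast
  moreover have "(\<lambda>(v, s). slot F v s) ` W = moved_pos_ends"
  proof (intro equalityI subsetI)
    fix x assume "x \<in> (\<lambda>(v, s). slot F v s) ` W"
    then obtain v s where vs: "(v, s) \<in> W" "x = slot F v s" by auto
    then have v: "v \<in> verts F" "s \<in> {1..4}" unfolding W_def by auto
    have "end_slot (fst x) (snd x) = (v, s)"
      using end_slot_eqI[OF v] vs(2) by simp
    then show "x \<in> moved_pos_ends"
      using vs slot_binding(2)[OF v] unfolding W_def moved_pos_ends_def by (cases x) auto
  next
    fix x assume "x \<in> moved_pos_ends"
    then obtain b e where x: "x = (b, e)" and b: "b \<in> pos_bindings c 1 k" "\<not> circ F b"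
      "moved_vertex (fst (end_slot b e))"
      unfolding moved_pos_ends_def by blast
    have bB: "b \<in> bindings F" using b(1) unfolding pos_bindings_def by blast
    obtain v s where vs: "end_slot b e = (v, s)" by fastforce
    then have "(v, s) \<in> W"
      using end_slot[OF bB b(2), of e] b unfolding W_def by auto
    moreover have "slot F v s = x"
      using end_slot(2)[OF bB b(2), of e] vs x by simp
    ultimately show "x \<in> (\<lambda>(v, s). slot F v s) ` W"
      by force
  qed
  ultimately show ?thesis
    using \<open>even (card W)\<close> by (metis card_image)
qed

lemma moved_pos_ends_eq:
  "moved_pos_ends = (\<lambda>b. (b, True)) ` neutral_ends True \<union> (\<lambda>b. (b, False)) ` neutral_ends False
     \<union> {b \<in> pos_bindings c 1 k. \<not> neutral b \<and> \<not> circ F b \<and> b \<in> moved} \<times> UNIV"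
proof -
  have "(b, e) \<in> moved_pos_ends \<longleftrightarrow> (e \<and> b \<in> neutral_ends True) \<or> (\<not> e \<and> b \<in> neutral_ends False)
      \<or> b \<in> {b \<in> pos_bindings c 1 k. \<not> neutral b \<and> \<not> circ F b \<and> b \<in> moved}" for b e
  proof (cases "neutral b")
    case True
    then show ?thesis unfolding moved_pos_ends_def neutral_ends_def by (cases e) auto
  next
    case False
    then show ?thesis
      using moved_vertex_end[of b e] unfolding moved_pos_ends_def neutral_ends_def pos_bindings_def
      by (cases e) auto
  qed
  then show ?thesis by (auto simp: set_eq_iff)
qed

lemma even_neutral_ends: "even (card (neutral_ends True) + card (neutral_ends False))"
proof -
  define M where "M = {b \<in> pos_bindings c 1 k. \<not> neutral b \<and> \<not> circ F b \<and> b \<in> moved}"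
  have "finite M" unfolding M_def using finite_pos_bindings by simp
  moreover have "M \<inter> neutral_ends e = {}" for e
    unfolding M_def neutral_ends_def by blast
  ultimately have "card moved_pos_ends = card (neutral_ends True) + card (neutral_ends False) + 2 * card M"
    unfolding moved_pos_ends_eq M_def[symmetric] using finite_neutral_ends
    by (subst card_Un_disjoint, auto, subst card_Un_disjoint, auto simp: card_image inj_on_def card_cartesian_product)
  then show ?thesis
    using even_card_moved_pos_ends by simp
qed

lemma sign_layered_next_kempe: "sign (layered_next c' k) = sign (layered_next c k)"
proof -
  have perm: "permutation (layered_next col k)" if "coloring N F col" for col
    using layered_next_permutes[OF that k_not_12] finite_layered permutation_permutes by blast
  note swap_moved = sign_swap_layers[OF finite_moved]
    and swap_ends = sign_swap_layers[OF finite_neutral_ends]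
  have "sign (layered_next c' k) = sign (swap_layers moved \<circ> layered_next c' k \<circ> swap_layers moved)"
    using swap_moved perm[OF coloring_kempe_move]
    by (simp add: sign_compose permutation_compose)
  also have "\<dots> = sign (swap_layers (neutral_ends False) \<circ> layered_next c k \<circ> swap_layers (neutral_ends True))"
    by (simp only: layered_next_kempe_conj)
  also have "\<dots> = (-1) ^ (card (neutral_ends True) + card (neutral_ends False)) * sign (layered_next c k)"
    using swap_ends perm[OF coloring] by (simp add: sign_compose permutation_compose power_add)
  also have "\<dots> = sign (layered_next c k)"
    using even_neutral_ends by simp
  finally show ?thesis .
qed

lemma card_layered_kempe: "card (layered c' k) = card (layered c k)"
proof -
  have "layered c' k = swap_layers moved ` layered c k"
  proof (intro equalityI subsetI)
    fix x assume "x \<in> layered c' k"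
    then have "swap_layers moved x \<in> layered c k"
      using mem_layered_kempe by blast
    then show "x \<in> swap_layers moved ` layered c k"
      by (rule image_eqI[rotated]) simp
  next
    fix x assume "x \<in> swap_layers moved ` layered c k"
    then obtain y where "y \<in> layered c k" "x = swap_layers moved y" by blast
    then show "x \<in> layered c' k"
      using mem_layered_kempe by simp
  qed
  moreover have "inj (swap_layers moved)"
    by (metis injI swap_layers_involutory)
  ultimately show ?thesis
    by (simp add: card_image inj_on_subset)
qed

end

theorem lemma2p7:
  fixes F :: "('f,'b,'v) foam" and N k :: nat
    and c c' :: "'f \<Rightarrow> nat set" and S :: "'f set"
  assumes "is_closed_foam N F"
    and "coloring N F c"
    and "closed_subsurface F c 1 2 S"
    and "c' = kempe_move c 1 2 S"
    and "3 \<le> k" and "k \<le> N"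
  shows "(theta_plus F c 1 k + theta_plus F c 2 k) mod 2
       = (theta_plus F c' 1 k + theta_plus F c' 2 k) mod 2"
proof -
  interpret K: kempe_setting F N c S k
    using assms by unfold_locales
  have c': "c' = K.c'"
    using assms(4) unfolding K.c'_def .
  note perm = K.layered_next_permutes[OF K.coloring K.k_not_12]
    K.layered_next_permutes[OF K.coloring_kempe_move K.k_not_12]
  have "even (num_cycles (K.layered c k) (K.layered_next c k)) \<longleftrightarrow>
      even (num_cycles (K.layered K.c' k) (K.layered_next K.c' k))"
    by (rule num_cycles_parity[OF K.finite_layered perm(1) K.finite_layered perm(2)])
      (simp_all add: K.card_layered_kempe K.sign_layered_next_kempe)
  then show ?thesis
    unfolding c' K.num_cycles_layered[OF K.coloring K.k_not_12]
      K.num_cycles_layered[OF K.coloring_kempe_move K.k_not_12]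
    by (simp add: mod2_eq_if)
qed
end
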